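(* Let $H$ be the tournament on vertex set $\{u,v,w,a,b,c,d\}$ with edges $u\to v$, $u\to w$, $w\to v$, $u\to c$, $u\to d$, $v\to c$, $v\to d$, $a\to u$, $b\to u$, $a\to v$, $b\to v$, $a\to b$, $c\to d$, $c\to a$, $c\to b$, $d\to a$, $d\to b$, $w\to a$, $b\to w$, $w\to c$, $d\to w$. Then: (1) $H$ has a proper $2$-coloring in which $u$ and $v$ have the same color and all vertices of $N^-(u)\cup N^+(v)$ have the other color; (2) in every proper $2$-coloring of $H$, $u$ and $v$ have the same color.
   Context: A proper $2$-coloring of a tournament is a partition of its vertex set into $2$ sets each inducing an acyclic (transitive) subtournament, i.e. a $2$-coloring with no monochromatic cyclic triangle. $N^+(x)=\{y: x\to y\}$ and $N^-(x)=\{y: y\to x\}$. *)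

theory Defs
  imports Main
begin

datatype vert = U | V | W | A | B | C | D

fun H_edge :: "vert \<Rightarrow> vert \<Rightarrow> bool" where
  "H_edge U V = True" | "H_edge U W = True" | "H_edge W V = True"
| "H_edge U C = True" | "H_edge U D = True" | "H_edge V C = True"
| "H_edge V D = True" | "H_edge A U = True" | "H_edge B U = True"
| "H_edge A V = True" | "H_edge B V = True" | "H_edge A B = True"
| "H_edge C D = True" | "H_edge C A = True" | "H_edge C B = True"
| "H_edge D A = True" | "H_edge D B = True" | "H_edge W A = True"
| "H_edge B W = True" | "H_edge W C = True" | "H_edge D W = True"
| "H_edge _ _ = False"

definition out_nbhd :: "('a \<Rightarrow> 'a \<Rightarrow> bool) \<Rightarrow> 'a \<Rightarrow> 'a set" where
  "out_nbhd E x = {y. E x y}"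
definition in_nbhd :: "('a \<Rightarrow> 'a \<Rightarrow> bool) \<Rightarrow> 'a \<Rightarrow> 'a set" where
  "in_nbhd E x = {y. E y x}"

definition proper_2_coloring :: "('a \<Rightarrow> 'a \<Rightarrow> bool) \<Rightarrow> ('a \<Rightarrow> bool) \<Rightarrow> bool" where
  "proper_2_coloring E col \<longleftrightarrow>
     (\<forall>x y z. E x y \<and> E y z \<and> E z x \<longrightarrow> \<not> (col x = col y \<and> col y = col z))"

end

theory Submission
  imports Defs
begin

text \<open>For (1), colour u, v, w alike and the rest with the other colour.
  For (2): if u and v got different colours, then every x in {c,d} and
  y in {a,b} would need different colours, since both u x y and
  v x y are cyclic triangles and one of u, v shares the colour of x.
  So a, b share one colour and c, d the other; but the cyclic triangles
  w a b and w c d force w to differ from both colours.\<close>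

lemma vert_all: "(\<forall>x::vert. P x) \<longleftrightarrow> P U \<and> P V \<and> P W \<and> P A \<and> P B \<and> P C \<and> P D"
  by (metis vert.exhaust)

lemma proper_2_coloring_triangle:
  assumes "proper_2_coloring E col" "E x y" "E y z" "E z x"
  shows "col x \<noteq> col y \<or> col y \<noteq> col z"
  using assms unfolding proper_2_coloring_def by blast

lemma H_proper_2_coloring_UVW:
  "proper_2_coloring H_edge (\<lambda>x. x \<in> {U, V, W})"
  unfolding proper_2_coloring_def by (simp add: vert_all)

lemma H_UVW_separates_neighbourhoods:
  "\<forall>x \<in> in_nbhd H_edge U \<union> out_nbhd H_edge V. x \<notin> {U, V, W}"
  unfolding in_nbhd_def out_nbhd_def Ball_def by (simp add: vert_all)

lemma H_proper_2_coloring_same_colour_UV: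
  assumes proper: "proper_2_coloring H_edge col"
  shows "col U = col V"
proof (rule ccontr)
  assume UV: "col U \<noteq> col V"
  have cross: "col x \<noteq> col y" if "x \<in> {C, D}" "y \<in> {A, B}" for x y
  proof
    assume xy: "col x = col y"
    have "H_edge U x" "H_edge V x" "H_edge x y" "H_edge y U" "H_edge y V"
      using that by auto
    then have "col U \<noteq> col x \<or> col x \<noteq> col y" "col V \<noteq> col x \<or> col x \<noteq> col y"
      by (auto dest: proper_2_coloring_triangle[OF proper])
    with xy UV show False by auto
  qed
  have "col W \<noteq> col A \<or> col A \<noteq> col B" "col W \<noteq> col C \<or> col C \<noteq> col D"
    using proper_2_coloring_triangle[OF proper, of W A B]
      proper_2_coloring_triangle[OF proper, of W C D] by simp_all
  with cross[of C A] cross[of C B] cross[of D A] show False by auto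
qed

theorem proposition5p3:
  shows "(\<exists>col. proper_2_coloring H_edge col \<and> col U = col V \<and>
            (\<forall>x \<in> in_nbhd H_edge U \<union> out_nbhd H_edge V. col x \<noteq> col U))
         \<and> (\<forall>col. proper_2_coloring H_edge col \<longrightarrow> col U = col V)"
proof
  show "\<exists>col. proper_2_coloring H_edge col \<and> col U = col V \<and>
            (\<forall>x \<in> in_nbhd H_edge U \<union> out_nbhd H_edge V. col x \<noteq> col U)"
    using H_proper_2_coloring_UVW H_UVW_separates_neighbourhoods
    by (intro exI[of _ "\<lambda>x. x \<in> {U, V, W}"]) auto
  show "\<forall>col. proper_2_coloring H_edge col \<longrightarrow> col U = col V"
    using H_proper_2_coloring_same_colour_UV by blast
qed

end
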